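(* The following linear maps $\mathcal{W}\to\mathcal{F}_\alpha\otimes\mathcal{F}_\beta$ (for the indicated $(\alpha,\beta)$) are 1-cocycles that are not 1-coboundaries: $\mathrm{d}^1_{0,1}(L_n)=n^2v_0\otimes v_n$ into $\mathcal{F}_0\otimes\mathcal{F}_1$; $\mathrm{d}^1_{1,0}(L_n)=n^2v_n\otimes v_0$ into $\mathcal{F}_1\otimes\mathcal{F}_0$; $\mathrm{d}_{0,2}(L_n)=n^3v_0\otimes v_n$ into $\mathcal{F}_0\otimes\mathcal{F}_2$; $\mathrm{d}_{2,0}(L_n)=n^3v_n\otimes v_0$ into $\mathcal{F}_2\otimes\mathcal{F}_0$; and $\mathrm{d}_{1,1}$ into $\mathcal{F}_1\otimes\mathcal{F}_1$ with $\mathrm{d}_{1,1}(L_n)=\sum_{i=1}^{n}i(n-i)v_i\otimes v_{n-i}$ for $n\ge1$, $\mathrm{d}_{1,1}(L_0)=0$, $\mathrm{d}_{1,1}(L_n)=-\sum_{i=n}^{-1}i(n-i)v_i\otimes v_{n-i}$ for $n\le-1$. Moreover, $\mathrm{d}^1_{0,1}$ and $\mathrm{d}_{0,1}$ are linearly independent, and $\mathrm{d}^1_{1,0}$ and $\mathrm{d}_{1,0}$ are linearly independent, where $\mathrm{d}_{0,1}(L_n)$ and $\mathrm{d}_{1,0}(L_n)$ are given by $\sum_{i=0}^{n-1}(i-n\beta)v_i\otimes v_{n-i}$ for $n\ge1$, $0$ for $n=0$, $-\sum_{i=n}^{-1}(i-n\beta)v_i\otimes v_{n-i}$ for $n\le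 -1$, with $\beta=1$, resp. $\beta=0$.
   Context: The Witt algebra $\mathcal{W}$ has basis $\{L_n\mid n\in\mathbb{Z}\}$ and bracket $[L_m,L_n]=(m-n)L_{m+n}$. $\mathcal{F}_\alpha$ has basis $\{v_n\}$ with $L_m\cdot v_n=-(\alpha m+n)v_{m+n}$; $\mathcal{F}_\alpha\otimes\mathcal{F}_\beta$ is a $\mathcal{W}$-module via $L_m\cdot(v_i\otimes v_j)=-(i+\alpha m)v_{m+i}\otimes v_j-(j+\beta m)v_i\otimes v_{m+j}$. A 1-cocycle is a linear map $d$ with $d([x,y])=x\cdot d(y)-y\cdot d(x)$; a 1-coboundary is a map $x\mapsto x\cdot v$ for a fixed $v$ in the module. *)

theory Defs
  imports Complex_Main "HOL-Library.Function_Algebras"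
begin

(* Witt algebra W over the complex numbers: elements are finitely supported
   coefficient functions  x :: int => complex,  x = sum_n x n L_n. *)
type_synonym witt = "int \<Rightarrow> complex"
(* Elements of F_alpha (x) F_beta: finitely supported u :: int*int => complex,
   u = sum_{(i,j)} u(i,j) v_i (x) v_j. *)
type_synonym tens = "int \<times> int \<Rightarrow> complex"

definition supp :: "('a \<Rightarrow> complex) \<Rightarrow> 'a set" where
  "supp f = {a. f a \<noteq> 0}"

definition Witt :: "witt set" where
  "Witt = {x. finite (supp x)}"

definition Tens :: "tens set" where
  "Tens = {u. finite (supp u)}"

definition L :: "int \<Rightarrow> witt" where
  "L n = (\<lambda>k. if k = n then 1 else 0)"

definition vv :: "int \<Rightarrow> int \<Rightarrow> tens" where
  "vv i j = (\<lambda>p. if p = (i, j) then 1 else 0)"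

definition smul :: "complex \<Rightarrow> tens \<Rightarrow> tens" where
  "smul c u = (\<lambda>p. c * u p)"

(* Lie bracket: [sum x_m L_m, sum y_n L_n] = sum (m - n) x_m y_n L_{m+n} *)
definition witt_br :: "witt \<Rightarrow> witt \<Rightarrow> witt" where
  "witt_br x y = (\<lambda>k. \<Sum>m\<in>supp x. of_int (m - (k - m)) * x m * y (k - m))"

(* action of W on F_alpha (x) F_beta:
   L_m.(v_i (x) v_j) = -(i + alpha m) v_{m+i} (x) v_j - (j + beta m) v_i (x) v_{m+j} *)
definition act :: "complex \<Rightarrow> complex \<Rightarrow> witt \<Rightarrow> tens \<Rightarrow> tens" where
  "act \<alpha> \<beta> x u = (\<lambda>(a, b). \<Sum>m\<in>supp x. x m *
      ( - (of_int (a - m) + \<alpha> * of_int m) * u (a - m, b)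
        - (of_int (b - m) + \<beta> * of_int m) * u (a, b - m)))"

definition lin_ext :: "(int \<Rightarrow> tens) \<Rightarrow> witt \<Rightarrow> tens" where
  "lin_ext D x = (\<Sum>n\<in>supp x. smul (x n) (D n))"

definition is_cocycle :: "complex \<Rightarrow> complex \<Rightarrow> (int \<Rightarrow> tens) \<Rightarrow> bool" where
  "is_cocycle \<alpha> \<beta> D \<longleftrightarrow> (\<forall>n. D n \<in> Tens) \<and>
     (\<forall>x\<in>Witt. \<forall>y\<in>Witt. lin_ext D (witt_br x y) =
         act \<alpha> \<beta> x (lin_ext D y) - act \<alpha> \<beta> y (lin_ext D x))"

definition is_coboundary :: "complex \<Rightarrow> complex \<Rightarrow> (int \<Rightarrow> tens) \<Rightarrow> bool" where
  "is_coboundary \<alpha> \<beta> D \<longleftrightarrow> (\<exists>v\<in>Tens. \<forall>x\<in>Witt. lin_ext D x = act \<alpha> \<beta> x v)"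

definition lin_indep2 :: "(int \<Rightarrow> tens) \<Rightarrow> (int \<Rightarrow> tens) \<Rightarrow> bool" where
  "lin_indep2 D1 D2 \<longleftrightarrow> (\<forall>a b. (\<forall>x\<in>Witt. smul a (lin_ext D1 x) + smul b (lin_ext D2 x) = 0)
       \<longrightarrow> a = 0 \<and> b = 0)"

definition d1_01 :: "int \<Rightarrow> tens" where
  "d1_01 n = smul (of_int (n^2)) (vv 0 n)"

definition d1_10 :: "int \<Rightarrow> tens" where
  "d1_10 n = smul (of_int (n^2)) (vv n 0)"

definition d_02 :: "int \<Rightarrow> tens" where
  "d_02 n = smul (of_int (n^3)) (vv 0 n)"

definition d_20 :: "int \<Rightarrow> tens" where
  "d_20 n = smul (of_int (n^3)) (vv n 0)"

definition d_11 :: "int \<Rightarrow> tens" where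
  "d_11 n = (if n \<ge> 1 then (\<Sum>i\<in>{1..n}. smul (of_int (i * (n - i))) (vv i (n - i)))
             else if n = 0 then 0
             else - (\<Sum>i\<in>{n..-1}. smul (of_int (i * (n - i))) (vv i (n - i))))"

definition d_beta :: "complex \<Rightarrow> int \<Rightarrow> tens" where
  "d_beta \<beta> n = (if n \<ge> 1 then (\<Sum>i\<in>{0..n-1}. smul (of_int i - of_int n * \<beta>) (vv i (n - i)))
             else if n = 0 then 0
             else - (\<Sum>i\<in>{n..-1}. smul (of_int i - of_int n * \<beta>) (vv i (n - i))))"

definition d_01 :: "int \<Rightarrow> tens" where "d_01 = d_beta 1"
definition d_10 :: "int \<Rightarrow> tens" where "d_10 = d_beta 0"

end

theory Submission
  imports Defs
begin

text \<open>
  It suffices to verify the cocycle identity on pairs of basis elements \<open>(L\<^sub>m, L\<^sub>n)\<close>,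
  which reduces everything to coefficient computations. Since \<open>v\<^sub>0 \<in> F\<^sub>0\<close> is
  annihilated by \<open>W\<close>, a map \<open>L\<^sub>n \<mapsto> c(n) v\<^sub>0 \<otimes> v\<^sub>n\<close> into
  \<open>F\<^sub>0 \<otimes> F\<^sub>\<beta>\<close> is a cocycle as soon as
  \<open>(m - n) c(m + n) = (m + \<beta> n) c(m) - (n + \<beta> m) c(n)\<close>, which holds for
  \<open>c(n) = n\<^sup>2, \<beta> = 1\<close> and \<open>c(n) = n\<^sup>3, \<beta> = 2\<close>; swapping the tensor factors
  gives the cases \<open>F\<^sub>1 \<otimes> F\<^sub>0\<close> and \<open>F\<^sub>2 \<otimes> F\<^sub>0\<close>.
  A coboundary \<open>x \<mapsto> x\<cdot>v\<close> comes from a finitely supported \<open>v\<close>, so its coefficient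
  at \<open>v\<^sub>0 \<otimes> v\<^sub>k\<close> in the image of \<open>L\<^sub>k\<close> is linear in \<open>k\<close> for large \<open>k\<close>, which
  excludes \<open>n\<^sup>2\<close> and \<open>n\<^sup>3\<close>; likewise the coefficient at \<open>v\<^sub>k \<otimes> v\<^sub>k\<close> in the image
  of \<open>L\<^sub>2\<^sub>k\<close> vanishes for large \<open>k\<close>, whereas for \<open>d\<^sub>1\<^sub>,\<^sub>1\<close> it is \<open>k\<^sup>2\<close>.
\<close>

lemma sum_apply: "(\<Sum>i\<in>I. f i) x = (\<Sum>i\<in>I. f i x)"
  by (induction I rule: infinite_finite_induct) auto

lemma supp_L: "supp (L n) = {n}"
  by (auto simp: supp_def L_def)

lemma L_in_Witt: "L n \<in> Witt"
  by (simp add: Witt_def supp_L)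

lemma lin_ext_apply: "lin_ext D x p = (\<Sum>n\<in>supp x. x n * D n p)"
  by (simp add: lin_ext_def smul_def sum_apply)

lemma lin_ext_L: "lin_ext D (L n) = D n"
  by (rule ext) (simp only: lin_ext_apply supp_L, simp add: L_def)

lemma smul_vv_in_Tens: "smul c (vv i j) \<in> Tens"
proof -
  have "supp (smul c (vv i j)) \<subseteq> {(i, j)}"
    by (auto simp: supp_def smul_def vv_def)
  then show ?thesis
    by (auto simp: Tens_def intro: finite_subset)
qed

lemma sum_vv_apply:
  assumes "finite I"
  shows "(\<Sum>i\<in>I. smul (c i) (vv i (n - i))) (a, b) = (if a \<in> I \<and> b = n - a then c a else 0)"
proof -
  have "(\<Sum>i\<in>I. smul (c i) (vv i (n - i))) (a, b)
      = (\<Sum>i\<in>I. if i = a then (if b = n - a then c a else 0) else 0)"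
    unfolding sum_apply smul_def vv_def by (rule sum.cong) auto
  then show ?thesis
    using assms by (simp add: sum.delta')
qed

lemma sum_vv_in_Tens:
  assumes "finite I"
  shows "(\<Sum>i\<in>I. smul (c i) (vv i (n - i))) \<in> Tens"
proof -
  have "supp (\<Sum>i\<in>I. smul (c i) (vv i (n - i))) \<subseteq> (\<lambda>i. (i, n - i)) ` I"
    using assms by (auto simp: supp_def sum_vv_apply split: if_splits)
  then show ?thesis
    using assms by (auto simp: Tens_def intro: finite_subset)
qed

lemma uminus_in_Tens: "u \<in> Tens \<Longrightarrow> - u \<in> Tens"
  by (simp add: Tens_def supp_def)

lemma swap_in_Tens: "u \<in> Tens \<Longrightarrow> u \<circ> prod.swap \<in> Tens"
proof -
  have "supp (u \<circ> prod.swap) = prod.swap ` supp u"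
    by (auto simp: supp_def image_iff)
  then show "u \<in> Tens \<Longrightarrow> u \<circ> prod.swap \<in> Tens"
    by (simp add: Tens_def)
qed

lemma vv_swap: "smul c (vv i j) \<circ> prod.swap = smul c (vv j i)"
  by (auto simp: fun_eq_iff smul_def vv_def)

text \<open>The action of \<open>L\<^sub>m\<close>, over an arbitrary commutative ring so that identities
  between integer coefficients transfer to \<open>\<complex>\<close> along \<open>of_int\<close>.\<close>

definition act_basis :: "'a::comm_ring_1 \<Rightarrow> 'a \<Rightarrow> int \<Rightarrow> (int \<times> int \<Rightarrow> 'a) \<Rightarrow> int \<times> int \<Rightarrow> 'a" where
  "act_basis \<alpha> \<beta> m u = (\<lambda>(a, b). - (of_int (a - m) + \<alpha> * of_int m) * u (a - m, b)
                                 - (of_int (b - m) + \<beta> * of_int m) * u (a, b - m))"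

lemma act_eq_sum_act_basis: "act \<alpha> \<beta> x u p = (\<Sum>m\<in>supp x. x m * act_basis \<alpha> \<beta> m u p)"
  by (cases p) (simp add: act_def act_basis_def)

lemma act_L: "act \<alpha> \<beta> (L n) u = act_basis \<alpha> \<beta> n u"
  by (rule ext) (simp only: act_eq_sum_act_basis supp_L, simp add: L_def)

lemma act_basis_sum:
  "act_basis \<alpha> \<beta> m (\<lambda>q. \<Sum>n\<in>T. y n * u n q) p = (\<Sum>n\<in>T. y n * act_basis \<alpha> \<beta> m (u n) p)"
  by (cases p) (simp add: act_basis_def sum_distrib_left sum_subtractf[symmetric] algebra_simps)

lemma act_basis_scale: "act_basis \<alpha> \<beta> m (\<lambda>q. c * u q) p = c * act_basis \<alpha> \<beta> m u p"
  by (cases p) (simp add: act_basis_def algebra_simps)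

lemma act_basis_of_int:
  "act_basis (of_int \<alpha>) (of_int \<beta>) m (\<lambda>q. of_int (u q)) p = of_int (act_basis \<alpha> \<beta> m u p)"
  by (cases p) (simp add: act_basis_def)

lemma supp_witt_br: "supp (witt_br x y) \<subseteq> (\<lambda>(m, n). m + n) ` (supp x \<times> supp y)"
proof
  fix k assume k: "k \<in> supp (witt_br x y)"
  have "\<exists>m\<in>supp x. y (k - m) \<noteq> 0"
  proof (rule ccontr)
    assume "\<not> ?thesis"
    then have "witt_br x y k = 0"
      unfolding witt_br_def by (intro sum.neutral) auto
    with k show False by (simp add: supp_def)
  qed
  then obtain m where "m \<in> supp x" "y (k - m) \<noteq> 0" by blast
  then show "k \<in> (\<lambda>(m, n). m + n) ` (supp x \<times> supp y)"
    by (auto simp: supp_def intro!: image_eqI[where x = "(m, k - m)"])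
qed

lemma lin_ext_witt_br:
  assumes "x \<in> Witt" "y \<in> Witt"
  shows "lin_ext D (witt_br x y) p
       = (\<Sum>m\<in>supp x. \<Sum>n\<in>supp y. x m * y n * (of_int (m - n) * D (m + n) p))"
proof -
  define K where "K = (\<lambda>(m, n). m + n) ` (supp x \<times> supp y)"
  have fin: "finite (supp x)" "finite (supp y)" "finite K"
    using assms by (auto simp: Witt_def K_def)
  define g where "g m n = x m * y n * (of_int (m - n) * D (m + n) p)" for m n
  have "lin_ext D (witt_br x y) p = (\<Sum>k\<in>K. witt_br x y k * D k p)"
    unfolding lin_ext_apply
    by (rule sum.mono_neutral_left) (use fin supp_witt_br in \<open>auto simp: K_def supp_def\<close>)
  also have "\<dots> = (\<Sum>k\<in>K. \<Sum>m\<in>supp x. g m (k - m))"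
    unfolding witt_br_def sum_distrib_right g_def by (intro sum.cong refl) (simp add: algebra_simps)
  also have "\<dots> = (\<Sum>m\<in>supp x. \<Sum>k\<in>K. g m (k - m))"
    by (rule sum.swap)
  also have "\<dots> = (\<Sum>m\<in>supp x. \<Sum>n\<in>supp y. g m n)"
  proof (rule sum.cong[OF refl])
    fix m assume m: "m \<in> supp x"
    have "(\<Sum>k\<in>K. g m (k - m)) = (\<Sum>n\<in>(\<lambda>k. k - m) ` K. g m n)"
      by (simp add: sum.reindex inj_on_diff_right)
    also have "\<dots> = (\<Sum>n\<in>supp y. g m n)"
    proof (rule sum.mono_neutral_right)
      show "supp y \<subseteq> (\<lambda>k. k - m) ` K"
        using m by (force simp: K_def)
    qed (use fin in \<open>auto simp: g_def supp_def\<close>)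
    finally show "(\<Sum>k\<in>K. g m (k - m)) = (\<Sum>n\<in>supp y. g m n)" .
  qed
  finally show ?thesis by (simp add: g_def)
qed

lemma is_cocycleI_basis:
  assumes "\<And>n. D n \<in> Tens"
    and basis: "\<And>m n p. of_int (m - n) * D (m + n) p = act_basis \<alpha> \<beta> m (D n) p - act_basis \<alpha> \<beta> n (D m) p"
  shows "is_cocycle \<alpha> \<beta> D"
  unfolding is_cocycle_def
proof (intro conjI allI ballI ext)
  fix x y p assume "x \<in> Witt" "y \<in> Witt"
  have "(act \<alpha> \<beta> x (lin_ext D y) - act \<alpha> \<beta> y (lin_ext D x)) p
      = (\<Sum>m\<in>supp x. \<Sum>n\<in>supp y. x m * y n * act_basis \<alpha> \<beta> m (D n) p)
        - (\<Sum>n\<in>supp y. \<Sum>m\<in>supp x. x m * y n * act_basis \<alpha> \<beta> n (D m) p)"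
    by (simp add: act_eq_sum_act_basis lin_ext_apply[abs_def] act_basis_sum
                  sum_distrib_left algebra_simps)
  also have "\<dots> = (\<Sum>m\<in>supp x. \<Sum>n\<in>supp y.
                      x m * y n * (act_basis \<alpha> \<beta> m (D n) p - act_basis \<alpha> \<beta> n (D m) p))"
    by (subst (2) sum.swap) (simp add: sum_subtractf[symmetric] algebra_simps)
  also have "\<dots> = (\<Sum>m\<in>supp x. \<Sum>n\<in>supp y. x m * y n * (of_int (m - n) * D (m + n) p))"
    by (simp only: basis)
  finally show "lin_ext D (witt_br x y) p = (act \<alpha> \<beta> x (lin_ext D y) - act \<alpha> \<beta> y (lin_ext D x)) p"
    using lin_ext_witt_br[OF \<open>x \<in> Witt\<close> \<open>y \<in> Witt\<close>] by simp
qed (use assms in auto)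

lemma is_coboundaryE_basis:
  assumes "is_coboundary \<alpha> \<beta> D"
  obtains v where "finite (supp v)" "\<And>n. D n = act_basis \<alpha> \<beta> n v"
proof -
  from assms obtain v where "v \<in> Tens" and v: "\<forall>x\<in>Witt. lin_ext D x = act \<alpha> \<beta> x v"
    unfolding is_coboundary_def by blast
  have "D n = act_basis \<alpha> \<beta> n v" for n
  proof -
    have "lin_ext D (L n) = act \<alpha> \<beta> (L n) v"
      using v L_in_Witt by blast
    then show ?thesis by (simp only: lin_ext_L act_L)
  qed
  with \<open>v \<in> Tens\<close> show thesis
    using that by (auto simp: Tens_def)
qed

lemma eventually_antidiagonal_vanishes:
  fixes v :: tens
  assumes "finite (supp v)"
  shows "\<forall>\<^sub>F k in at_top. v (-k, k) = 0 \<and> v (k, -k) = 0"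
proof -
  have "finite ((\<lambda>p. \<bar>fst p\<bar>) ` supp v)"
    using assms by simp
  then obtain M where M: "\<And>a b. (a, b) \<in> supp v \<Longrightarrow> \<bar>a\<bar> \<le> M"
    by (fastforce simp: bdd_above_def dest!: bdd_above_finite)
  have "v (-k, k) = 0 \<and> v (k, -k) = 0" if "M < k" for k
    using M[of "-k" k] M[of k "-k"] that by (force simp: supp_def)
  then show ?thesis
    by (intro eventually_mono[OF eventually_gt_at_top[of M]])
qed

lemma act_swap: "act \<alpha> \<beta> x (u \<circ> prod.swap) = act \<beta> \<alpha> x u \<circ> prod.swap"
  by (simp add: act_def fun_eq_iff algebra_simps)

lemma lin_ext_swap: "lin_ext (\<lambda>n. D n \<circ> prod.swap) x = lin_ext D x \<circ> prod.swap"
  by (simp add: lin_ext_apply fun_eq_iff)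

lemma is_cocycle_swap:
  assumes "is_cocycle \<beta> \<alpha> D"
  shows "is_cocycle \<alpha> \<beta> (\<lambda>n. D n \<circ> prod.swap)"
  unfolding is_cocycle_def
proof (intro conjI allI ballI)
  fix x y assume "x \<in> Witt" "y \<in> Witt"
  then have "lin_ext D (witt_br x y) = act \<beta> \<alpha> x (lin_ext D y) - act \<beta> \<alpha> y (lin_ext D x)"
    using assms by (simp add: is_cocycle_def)
  then show "lin_ext (\<lambda>n. D n \<circ> prod.swap) (witt_br x y)
      = act \<alpha> \<beta> x (lin_ext (\<lambda>n. D n \<circ> prod.swap) y) - act \<alpha> \<beta> y (lin_ext (\<lambda>n. D n \<circ> prod.swap) x)"
    by (simp add: lin_ext_swap act_swap fun_eq_iff)
qed (use assms swap_in_Tens in \<open>auto simp: is_cocycle_def\<close>)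

lemma is_coboundary_unswap: "is_coboundary \<alpha> \<beta> (\<lambda>n. D n \<circ> prod.swap) \<Longrightarrow> is_coboundary \<beta> \<alpha> D"
proof -
  assume "is_coboundary \<alpha> \<beta> (\<lambda>n. D n \<circ> prod.swap)"
  then obtain v where "v \<in> Tens" and v: "\<forall>x\<in>Witt. lin_ext D x \<circ> prod.swap = act \<alpha> \<beta> x v"
    unfolding is_coboundary_def lin_ext_swap by blast
  have "lin_ext D x = act \<beta> \<alpha> x (v \<circ> prod.swap)" if "x \<in> Witt" for x
  proof -
    have "lin_ext D x = act \<alpha> \<beta> x v \<circ> prod.swap"
      using v that by (metis comp_assoc comp_id swap_comp_swap)
    also have "\<dots> = act \<beta> \<alpha> x (v \<circ> prod.swap)"
      by (metis act_swap comp_assoc comp_id swap_comp_swap)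
    finally show ?thesis .
  qed
  with \<open>v \<in> Tens\<close> show ?thesis
    unfolding is_coboundary_def by (blast intro: swap_in_Tens)
qed

lemma act_basis_vv0:
  "act_basis 0 \<beta> m (smul c (vv 0 n)) (a, b)
   = (if a = 0 \<and> b = m + n then - (of_int n + \<beta> * of_int m) * c else 0)"
  by (auto simp: act_basis_def smul_def vv_def algebra_simps)

lemma is_cocycle_vv0:
  assumes c: "\<And>m n. of_int (m - n) * c (m + n)
                     = (of_int m + \<beta> * of_int n) * c m - (of_int n + \<beta> * of_int m) * c n"
  shows "is_cocycle 0 \<beta> (\<lambda>n. smul (c n) (vv 0 n))"
proof (rule is_cocycleI_basis)
  fix m n :: int and p :: "int \<times> int"
  obtain a b where p: "p = (a, b)"
    by fastforce
  show "of_int (m - n) * smul (c (m + n)) (vv 0 (m + n)) p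
      = act_basis 0 \<beta> m (smul (c n) (vv 0 n)) p - act_basis 0 \<beta> n (smul (c m) (vv 0 m)) p"
    unfolding p act_basis_vv0 using c[of m n] by (auto simp: smul_def vv_def add.commute algebra_simps)
qed (rule smul_vv_in_Tens)

lemma coboundary_vv0_eventually_linear:
  assumes "is_coboundary 0 \<beta> (\<lambda>n. smul (c n) (vv 0 n))"
  shows "\<exists>C. \<forall>\<^sub>F k in at_top. c k = of_int k * C"
proof -
  obtain v where "finite (supp v)" and v: "\<And>n. smul (c n) (vv 0 n) = act_basis 0 \<beta> n v"
    using is_coboundaryE_basis[OF assms] by blast
  have "c k = of_int k * (- \<beta> * v (0, 0))" if "v (-k, k) = 0" for k
    using fun_cong[OF v[of k], of "(0, k)"] that by (simp add: smul_def vv_def act_basis_def)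
  then have "\<forall>\<^sub>F k in at_top. c k = of_int k * (- \<beta> * v (0, 0))"
    by (intro eventually_mono[OF eventually_antidiagonal_vanishes[OF \<open>finite (supp v)\<close>]]) blast
  then show ?thesis ..
qed

lemma power_not_eventually_linear:
  assumes "2 \<le> j"
  shows "\<not> (\<forall>\<^sub>F k in at_top. (of_int (k ^ j) :: complex) = of_int k * C)"
proof
  assume "\<forall>\<^sub>F k in at_top. (of_int (k ^ j) :: complex) = of_int k * C"
  then obtain N where N: "\<And>k. N \<le> k \<Longrightarrow> (of_int (k ^ j) :: complex) = of_int k * C"
    by (auto simp: eventually_at_top_linorder)
  obtain i where j: "j = Suc (Suc i)"
    using assms by (metis add_2_eq_Suc le_Suc_ex)
  have power_eq_C: "of_int (k ^ Suc i) = C" if "max N 1 \<le> k" for k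
  proof -
    have "of_int k * of_int (k ^ Suc i) = of_int k * C"
      using N[of k] that by (simp add: j)
    then show ?thesis
      using that by simp
  qed
  have "max N 1 ^ Suc i < (max N 1 + 1) ^ Suc i"
    by (intro power_strict_mono) auto
  moreover have "(of_int (max N 1 ^ Suc i) :: complex) = of_int ((max N 1 + 1) ^ Suc i)"
    using power_eq_C[of "max N 1"] power_eq_C[of "max N 1 + 1"] by auto
  ultimately show False
    by (metis of_int_eq_iff order_less_irrefl)
qed

lemma is_cocycle_d1_01: "is_cocycle 0 1 d1_01"
  unfolding d1_01_def[abs_def] by (rule is_cocycle_vv0) (simp add: power2_eq_square algebra_simps)

lemma not_coboundary_d1_01: "\<not> is_coboundary 0 1 d1_01"
proof
  assume "is_coboundary 0 1 d1_01"
  then obtain C where "\<forall>\<^sub>F k in at_top. (of_int (k ^ 2) :: complex) = of_int k * C"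
    using coboundary_vv0_eventually_linear[where c = "\<lambda>n. of_int (n ^ 2)"]
    unfolding d1_01_def[abs_def] by blast
  with power_not_eventually_linear[of 2] show False
    by simp
qed

lemma is_cocycle_d_02: "is_cocycle 0 2 d_02"
  unfolding d_02_def[abs_def] by (rule is_cocycle_vv0) (simp add: power3_eq_cube algebra_simps)

lemma not_coboundary_d_02: "\<not> is_coboundary 0 2 d_02"
proof
  assume "is_coboundary 0 2 d_02"
  then obtain C where "\<forall>\<^sub>F k in at_top. (of_int (k ^ 3) :: complex) = of_int k * C"
    using coboundary_vv0_eventually_linear[where c = "\<lambda>n. of_int (n ^ 3)"]
    unfolding d_02_def[abs_def] by blast
  with power_not_eventually_linear[of 3] show False
    by simp
qed

lemma d1_10_eq_swap: "d1_10 = (\<lambda>n. d1_01 n \<circ> prod.swap)"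
  by (simp add: fun_eq_iff d1_10_def d1_01_def vv_swap)

lemma d_20_eq_swap: "d_20 = (\<lambda>n. d_02 n \<circ> prod.swap)"
  by (simp add: fun_eq_iff d_20_def d_02_def vv_swap)

lemma is_cocycle_d1_10: "is_cocycle 1 0 d1_10"
  unfolding d1_10_eq_swap by (rule is_cocycle_swap[OF is_cocycle_d1_01])

lemma not_coboundary_d1_10: "\<not> is_coboundary 1 0 d1_10"
  using is_coboundary_unswap not_coboundary_d1_01 unfolding d1_10_eq_swap by blast

lemma is_cocycle_d_20: "is_cocycle 2 0 d_20"
  unfolding d_20_eq_swap by (rule is_cocycle_swap[OF is_cocycle_d_02])

lemma not_coboundary_d_20: "\<not> is_coboundary 2 0 d_20"
  using is_coboundary_unswap not_coboundary_d_02 unfolding d_20_eq_swap by blast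

text \<open>A sign-case-free closed form for the coefficients of \<open>2 d\<^sub>1\<^sub>,\<^sub>1(L\<^sub>n)\<close>.\<close>

definition d_11_twice :: "int \<Rightarrow> int \<times> int \<Rightarrow> int" where
  "d_11_twice n = (\<lambda>(a, b). if a + b = n then a * \<bar>b\<bar> + \<bar>a\<bar> * b else 0)"

lemma d_11_twice_eq: "of_int (d_11_twice n p) = 2 * d_11 n p"
proof (cases p)
  case (Pair a b)
  consider "n \<ge> 1" | "n = 0" | "n \<le> -1"
    by linarith
  then show ?thesis
  proof cases
    case 1
    then show ?thesis
      by (auto simp: Pair d_11_def d_11_twice_def sum_vv_apply abs_if algebra_simps)
  next
    case 2
    then show ?thesis
      by (auto simp: Pair d_11_def d_11_twice_def abs_if)
  next
    case 3
    then show ?thesis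
      by (auto simp: Pair d_11_def d_11_twice_def sum_vv_apply abs_if algebra_simps)
  qed
qed

lemma d_11_twice_identity:
  "(m - n) * d_11_twice (m + n) p = act_basis 1 1 m (d_11_twice n) p - act_basis 1 1 n (d_11_twice m) p"
proof (cases p)
  case (Pair a b)
  show ?thesis
  proof (cases "a + b = m + n")
    case True
    then have b: "b = m + n - a" by simp
    have "\<bar>m + n - a - m\<bar> = \<bar>a - n\<bar>" "\<bar>m + n - a - n\<bar> = \<bar>a - m\<bar>"
      by linarith+
    then show ?thesis
      unfolding Pair b by (simp add: act_basis_def d_11_twice_def algebra_simps)
  next
    case False
    then show ?thesis
      by (simp add: Pair act_basis_def d_11_twice_def)
  qed
qed

lemma is_cocycle_d_11: "is_cocycle 1 1 d_11"
proof (rule is_cocycleI_basis)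
  show "d_11 n \<in> Tens" for n
    by (simp add: d_11_def sum_vv_in_Tens uminus_in_Tens) (simp add: Tens_def supp_def)
  fix m n :: int and p :: "int \<times> int"
  have twice: "(\<lambda>q. 2 * d_11 k q) = (\<lambda>q. of_int (d_11_twice k q))" for k
    by (simp add: d_11_twice_eq)
  have "2 * (of_int (m - n) * d_11 (m + n) p) = of_int ((m - n) * d_11_twice (m + n) p)"
    by (simp add: d_11_twice_eq)
  also have "\<dots> = of_int (act_basis 1 1 m (d_11_twice n) p - act_basis 1 1 n (d_11_twice m) p)"
    by (simp only: d_11_twice_identity)
  also have "\<dots> = act_basis 1 1 m (\<lambda>q. 2 * d_11 n q) p - act_basis 1 1 n (\<lambda>q. 2 * d_11 m q) p"
    by (simp only: of_int_diff act_basis_of_int[of 1 1, simplified, symmetric] twice)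
  also have "\<dots> = 2 * (act_basis 1 1 m (d_11 n) p - act_basis 1 1 n (d_11 m) p)"
    by (simp only: act_basis_scale right_diff_distrib)
  finally show "of_int (m - n) * d_11 (m + n) p = act_basis 1 1 m (d_11 n) p - act_basis 1 1 n (d_11 m) p"
    by (metis mult_left_cancel zero_neq_numeral)
qed

lemma not_coboundary_d_11: "\<not> is_coboundary 1 1 d_11"
proof
  assume "is_coboundary 1 1 d_11"
  then obtain v where "finite (supp v)" and v: "\<And>n. d_11 n = act_basis 1 1 n v"
    by (auto elim: is_coboundaryE_basis)
  obtain k where k: "k \<ge> 1" "v (-k, k) = 0" "v (k, -k) = 0"
    using eventually_conj[OF eventually_ge_at_top[of 1]
                             eventually_antidiagonal_vanishes[OF \<open>finite (supp v)\<close>]]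
    unfolding eventually_at_top_linorder by blast
  have "of_int (d_11_twice (k + k) (k, k)) = 2 * act_basis 1 1 (k + k) v (k, k)"
    by (simp add: d_11_twice_eq v)
  with k show False
    by (simp add: d_11_twice_def act_basis_def)
qed

lemma lin_indep2I:
  assumes "D1 n p = 0" "D2 n p \<noteq> 0" "D1 n q \<noteq> 0"
  shows "lin_indep2 D1 D2"
  unfolding lin_indep2_def
proof (intro allI impI)
  fix a b assume "\<forall>x\<in>Witt. smul a (lin_ext D1 x) + smul b (lin_ext D2 x) = 0"
  then have "smul a (lin_ext D1 (L n)) + smul b (lin_ext D2 (L n)) = 0"
    using L_in_Witt by blast
  then have "smul a (D1 n) + smul b (D2 n) = 0"
    by (simp only: lin_ext_L)
  then have "a * D1 n r + b * D2 n r = 0" for r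
    by (metis (mono_tags) plus_fun_apply smul_def zero_fun_apply)
  from this[of p] this[of q] assms show "a = 0 \<and> b = 0"
    by auto
qed

lemma lin_indep2_d1_01_d_01: "lin_indep2 d1_01 d_01"
  by (rule lin_indep2I[of _ 2 "(1, 1)" _ "(0, 2)"])
     (simp_all add: d1_01_def d_01_def d_beta_def sum_vv_apply, simp_all add: smul_def vv_def)

lemma lin_indep2_d1_10_d_10: "lin_indep2 d1_10 d_10"
  by (rule lin_indep2I[of _ 2 "(1, 1)" _ "(2, 0)"])
     (simp_all add: d1_10_def d_10_def d_beta_def sum_vv_apply, simp_all add: smul_def vv_def)

theorem propositionP3p1:
  shows "is_cocycle 0 1 d1_01 \<and> \<not> is_coboundary 0 1 d1_01
       \<and> is_cocycle 1 0 d1_10 \<and> \<not> is_coboundary 1 0 d1_10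
       \<and> is_cocycle 0 2 d_02 \<and> \<not> is_coboundary 0 2 d_02
       \<and> is_cocycle 2 0 d_20 \<and> \<not> is_coboundary 2 0 d_20
       \<and> is_cocycle 1 1 d_11 \<and> \<not> is_coboundary 1 1 d_11
       \<and> lin_indep2 d1_01 d_01 \<and> lin_indep2 d1_10 d_10"
  using is_cocycle_d1_01 not_coboundary_d1_01 is_cocycle_d1_10 not_coboundary_d1_10
    is_cocycle_d_02 not_coboundary_d_02 is_cocycle_d_20 not_coboundary_d_20
    is_cocycle_d_11 not_coboundary_d_11 lin_indep2_d1_01_d_01 lin_indep2_d1_10_d_10
  by blast

end
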